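(* Let $q^*$ be a fixed point of $S$ achieving the rate-distortion-perception function, and let $$M_{ij}=q^*(i)\sum_xp(x)\frac{A(x,i)A(x,j)}{\big(\sum_kq^*(k)A(x,k)\big)^2}.$$ Then every eigenvalue $\lambda$ of $M$ satisfies $\lambda\le1$.
   Context: Finite alphabets $\mathcal X=\hat{\mathcal X}$, source distribution $p$, distortion $d\ge0$, and multipliers $s_1,s_2\ge0$. $f:(0,\infty)\to\mathbb R$ is convex, twice differentiable, with $f(1)=0$, and $D_f(p\|q)=\sum_xq(x)f(p(x)/q(x))$. $S$ is the implicitly defined map $$S[q](i)=q(i)\sum_xp(x)\frac{A_q(x,i)}{\sum_kq(k)A_q(x,k)},\qquad A_q(x,i)=\exp\{-s_1d(x,i)-s_2[f(p(i)/S[q](i))-\tfrac{p(i)}{S[q](i)}f'(p(i)/S[q](i))]\},$$ and $A=A_{q^*}$. *)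

theory Defs
  imports "HOL-Analysis.Analysis"
begin

text \<open>Finite alphabet: a finite type 'a, used both for the source alphabet X and the
reconstruction alphabet (X = hat X).  Distributions are functions 'a => real.\<close>

definition is_pmf :: "('a::finite \<Rightarrow> real) \<Rightarrow> bool" where
  "is_pmf q \<longleftrightarrow> (\<forall>x. 0 \<le> q x) \<and> (\<Sum>x\<in>UNIV. q x) = 1"

definition A_fac :: "real \<Rightarrow> real \<Rightarrow> ('a \<Rightarrow> 'a \<Rightarrow> real) \<Rightarrow> (real \<Rightarrow> real)
    \<Rightarrow> ('a \<Rightarrow> real) \<Rightarrow> ('a \<Rightarrow> real) \<Rightarrow> 'a \<Rightarrow> 'a \<Rightarrow> real" where
  "A_fac s1 s2 d f p r x i =
     exp (- s1 * d x i - s2 * (f (p i / r i) - p i / r i * deriv f (p i / r i)))"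

text \<open>The implicitly defined map S: "S_image s1 s2 d f p q r" states r = S[q], i.e.
  r(i) = q(i) * sum_x p(x) A_q(x,i) / sum_k q(k) A_q(x,k), where A_q is built from r = S[q].\<close>

definition S_image :: "real \<Rightarrow> real \<Rightarrow> ('a::finite \<Rightarrow> 'a \<Rightarrow> real) \<Rightarrow> (real \<Rightarrow> real)
    \<Rightarrow> ('a \<Rightarrow> real) \<Rightarrow> ('a \<Rightarrow> real) \<Rightarrow> ('a \<Rightarrow> real) \<Rightarrow> bool" where
  "S_image s1 s2 d f p q r \<longleftrightarrow>
     (\<forall>i. r i = q i * (\<Sum>x\<in>UNIV. p x * A_fac s1 s2 d f p r x i
                         / (\<Sum>k\<in>UNIV. q k * A_fac s1 s2 d f p r x k)))"

definition S_fixed_point :: "real \<Rightarrow> real \<Rightarrow> ('a::finite \<Rightarrow> 'a \<Rightarrow> real) \<Rightarrow> (real \<Rightarrow> real)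
    \<Rightarrow> ('a \<Rightarrow> real) \<Rightarrow> ('a \<Rightarrow> real) \<Rightarrow> bool" where
  "S_fixed_point s1 s2 d f p q \<longleftrightarrow> S_image s1 s2 d f p q q"

definition M_mat :: "real \<Rightarrow> real \<Rightarrow> ('a::finite \<Rightarrow> 'a \<Rightarrow> real) \<Rightarrow> (real \<Rightarrow> real)
    \<Rightarrow> ('a \<Rightarrow> real) \<Rightarrow> ('a \<Rightarrow> real) \<Rightarrow> real^'a^'a" where
  "M_mat s1 s2 d f p q = (\<chi> i j. q i * (\<Sum>x\<in>UNIV.
       p x * A_fac s1 s2 d f p q x i * A_fac s1 s2 d f p q x j
       / (\<Sum>k\<in>UNIV. q k * A_fac s1 s2 d f p q x k)^2))"

definition eigenvalue_of :: "real^'n^'n \<Rightarrow> complex \<Rightarrow> bool" where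
  "eigenvalue_of M lam \<longleftrightarrow>
     (\<exists>v::complex^'n. v \<noteq> 0 \<and> (\<chi> i j. complex_of_real (M $ i $ j)) *v v = lam *s v)"

end

theory Submission
  imports Defs
begin

text \<open>
  Normalise A(x,i) = Z(x) \<beta>(x,i) with Z(x) = \<Sum>k. q(k) A(x,k), so that \<Sum>k. q(k) \<beta>(x,k) = 1,
  and M = Q B with Q = diag q and the positive semidefinite B(i,j) = \<Sum>x. p(x) \<beta>(x,i) \<beta>(x,j);
  the fixed point equation says \<Sum>x. p(x) \<beta>(x,i) = 1 whenever q(i) > 0.
  For an eigenvector v put t = \<beta> v and w = B v. Then Q w = \<lambda> v, and pairing with w gives
  \<Sum>i. q(i) |w(i)|^2 = \<lambda> \<Sum>x. p(x) |t(x)|^2, so \<lambda> is real and nonnegative. Each w(i) with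
  q(i) > 0 is a convex combination of the t(x), so Jensen's inequality bounds the left side
  by the sum on the right, hence \<lambda> \<le> 1. Only positivity of A enters.
\<close>

lemma norm_convex_combination_square_le:
  fixes \<alpha> :: "'a \<Rightarrow> real" and t :: "'a \<Rightarrow> 'b::real_normed_vector"
  assumes "finite S" and "\<And>x. x \<in> S \<Longrightarrow> 0 \<le> \<alpha> x" and "sum \<alpha> S = 1"
  shows "(norm (\<Sum>x\<in>S. \<alpha> x *\<^sub>R t x))\<^sup>2 \<le> (\<Sum>x\<in>S. \<alpha> x * (norm (t x))\<^sup>2)"
proof -
  have "norm (\<Sum>x\<in>S. \<alpha> x *\<^sub>R t x) \<le> (\<Sum>x\<in>S. \<alpha> x *\<^sub>R norm (t x))"
    using norm_sum[of "\<lambda>x. \<alpha> x *\<^sub>R t x" S] assms(2) by simp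
  then have "(norm (\<Sum>x\<in>S. \<alpha> x *\<^sub>R t x))\<^sup>2 \<le> (\<Sum>x\<in>S. \<alpha> x *\<^sub>R norm (t x))\<^sup>2"
    by (intro power_mono) auto
  also have "\<dots> \<le> (\<Sum>x\<in>S. \<alpha> x * (norm (t x))\<^sup>2)"
    using assms convex_on_sum[OF _ _ convex_power2, of S \<alpha> "\<lambda>x. norm (t x)"] by fastforce
  finally show ?thesis .
qed

lemma weighted_kernel_norm_square_le:
  fixes q :: "'i::finite \<Rightarrow> real" and p :: "'x::finite \<Rightarrow> real"
    and \<beta> :: "'x \<Rightarrow> 'i \<Rightarrow> real" and t :: "'x \<Rightarrow> 'b::real_normed_vector"
  assumes q: "\<And>i. 0 \<le> q i" and p: "\<And>x. 0 \<le> p x" and \<beta>: "\<And>x i. 0 \<le> \<beta> x i"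
    and q_\<beta>: "\<And>x. (\<Sum>k\<in>UNIV. q k * \<beta> x k) = 1"
    and p_\<beta>: "\<And>i. 0 < q i \<Longrightarrow> (\<Sum>x\<in>UNIV. p x * \<beta> x i) = 1"
  shows "(\<Sum>i\<in>UNIV. q i * (norm (\<Sum>x\<in>UNIV. (p x * \<beta> x i) *\<^sub>R t x))\<^sup>2)
           \<le> (\<Sum>x\<in>UNIV. p x * (norm (t x))\<^sup>2)"
proof -
  have "q i * (norm (\<Sum>x\<in>UNIV. (p x * \<beta> x i) *\<^sub>R t x))\<^sup>2
          \<le> q i * (\<Sum>x\<in>UNIV. p x * \<beta> x i * (norm (t x))\<^sup>2)" for i
  proof (cases "q i = 0")
    case False
    with q[of i] have "0 < q i" by linarith
    with p \<beta> p_\<beta> show ?thesis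
      by (intro mult_left_mono norm_convex_combination_square_le) auto
  qed simp
  then have "(\<Sum>i\<in>UNIV. q i * (norm (\<Sum>x\<in>UNIV. (p x * \<beta> x i) *\<^sub>R t x))\<^sup>2)
      \<le> (\<Sum>i\<in>UNIV. \<Sum>x\<in>UNIV. p x * (norm (t x))\<^sup>2 * (q i * \<beta> x i))"
    by (intro sum_mono) (simp add: sum_distrib_left mult_ac)
  also have "\<dots> = (\<Sum>x\<in>UNIV. p x * (norm (t x))\<^sup>2)"
    by (subst sum.swap) (simp add: q_\<beta> flip: sum_distrib_left)
  finally show ?thesis .
qed

lemma kernel_matrix_vector_mult:
  fixes q :: "'i::finite \<Rightarrow> real" and p :: "'x::finite \<Rightarrow> real"
    and \<beta> :: "'x \<Rightarrow> 'i \<Rightarrow> real" and v :: "complex^'i"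
  shows "((\<chi> i j. of_real (q i * (\<Sum>x\<in>UNIV. p x * \<beta> x i * \<beta> x j))) *v v) $ i
           = of_real (q i) * (\<Sum>x\<in>UNIV. of_real (p x * \<beta> x i) * (\<Sum>j\<in>UNIV. of_real (\<beta> x j) * v $ j))"
  by (simp add: matrix_vector_mult_def of_real_sum sum_distrib_left sum_distrib_right mult_ac)
     (rule sum.swap)

lemma kernel_pairing_adjoint:
  fixes p :: "'x::finite \<Rightarrow> real" and \<beta> :: "'x \<Rightarrow> 'i::finite \<Rightarrow> real"
    and t :: "'x \<Rightarrow> complex" and v :: "'i \<Rightarrow> complex"
  shows "(\<Sum>i\<in>UNIV. cnj (\<Sum>x\<in>UNIV. of_real (p x * \<beta> x i) * t x) * v i)
           = (\<Sum>x\<in>UNIV. of_real (p x) * cnj (t x) * (\<Sum>i\<in>UNIV. of_real (\<beta> x i) * v i))"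
proof -
  have "(\<Sum>i\<in>UNIV. cnj (\<Sum>x\<in>UNIV. of_real (p x * \<beta> x i) * t x) * v i)
      = (\<Sum>i\<in>UNIV. \<Sum>x\<in>UNIV. of_real (p x) * cnj (t x) * (of_real (\<beta> x i) * v i))"
    unfolding cnj_sum sum_distrib_right by (intro sum.cong refl) (simp add: mult_ac)
  also have "\<dots> = (\<Sum>x\<in>UNIV. of_real (p x) * cnj (t x) * (\<Sum>i\<in>UNIV. of_real (\<beta> x i) * v i))"
    by (subst sum.swap) (simp add: sum_distrib_left)
  finally show ?thesis .
qed

lemma eigenvalue_of_kernel_real_le_one:
  fixes q :: "'i::finite \<Rightarrow> real" and p :: "'x::finite \<Rightarrow> real"
    and \<beta> :: "'x \<Rightarrow> 'i \<Rightarrow> real" and lam :: complex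
  assumes q: "\<And>i. 0 \<le> q i" and p: "\<And>x. 0 \<le> p x" and \<beta>: "\<And>x i. 0 \<le> \<beta> x i"
    and q_\<beta>: "\<And>x. (\<Sum>k\<in>UNIV. q k * \<beta> x k) = 1"
    and p_\<beta>: "\<And>i. 0 < q i \<Longrightarrow> (\<Sum>x\<in>UNIV. p x * \<beta> x i) = 1"
    and ev: "eigenvalue_of (\<chi> i j. q i * (\<Sum>x\<in>UNIV. p x * \<beta> x i * \<beta> x j)) lam"
  shows "Im lam = 0 \<and> Re lam \<le> 1"
proof -
  obtain v :: "complex^'i" where "v \<noteq> 0"
    and Mv: "(\<chi> i j. complex_of_real (q i * (\<Sum>x\<in>UNIV. p x * \<beta> x i * \<beta> x j))) *v v = lam *s v"
    using ev unfolding eigenvalue_of_def by auto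
  then obtain i\<^sub>0 where "v $ i\<^sub>0 \<noteq> 0" by (metis vec_eq_iff zero_index)
  define t where "t x = (\<Sum>j\<in>UNIV. of_real (\<beta> x j) * v $ j)" for x
  define w where "w i = (\<Sum>x\<in>UNIV. of_real (p x * \<beta> x i) * t x)" for i
  define b where "b = (\<Sum>i\<in>UNIV. q i * (norm (w i))\<^sup>2)"
  define c where "c = (\<Sum>x\<in>UNIV. p x * (norm (t x))\<^sup>2)"
  have Qw: "of_real (q i) * w i = lam * v $ i" for i
    using arg_cong[OF Mv, of "\<lambda>u. u $ i"] unfolding kernel_matrix_vector_mult
    by (simp add: w_def t_def)
  have wv: "(\<Sum>i\<in>UNIV. cnj (w i) * v $ i) = of_real c"
  proof -
    have "(\<Sum>i\<in>UNIV. cnj (w i) * v $ i) = (\<Sum>x\<in>UNIV. of_real (p x) * cnj (t x) * t x)"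
      using kernel_pairing_adjoint[of p \<beta> t "\<lambda>i. v $ i"] by (simp only: w_def t_def[symmetric])
    then show ?thesis
      unfolding c_def of_real_sum of_real_mult complex_norm_square by (simp add: mult_ac)
  qed
  have bc: "of_real b = lam * of_real c"
  proof -
    have "of_real b = (\<Sum>i\<in>UNIV. cnj (w i) * (of_real (q i) * w i))"
      unfolding b_def of_real_sum of_real_mult complex_norm_square by (simp add: mult_ac)
    also have "\<dots> = lam * of_real c"
      by (simp add: Qw sum_distrib_left mult.left_commute flip: wv)
    finally show ?thesis .
  qed
  have "0 \<le> b" unfolding b_def using q by (intro sum_nonneg) auto
  have "b \<le> c"
    using weighted_kernel_norm_square_le[OF q p \<beta> q_\<beta> p_\<beta>, of t]
    by (simp add: b_def c_def w_def scaleR_conv_of_real)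
  show ?thesis
  proof (cases "c = 0")
    case True
    with \<open>0 \<le> b\<close> \<open>b \<le> c\<close> have "b = 0" by simp
    then have "q i\<^sub>0 * (norm (w i\<^sub>0))\<^sup>2 = 0"
      using q unfolding b_def by (simp add: sum_nonneg_eq_0_iff)
    then have "lam * v $ i\<^sub>0 = 0"
      by (simp flip: Qw)
    with \<open>v $ i\<^sub>0 \<noteq> 0\<close> show ?thesis by simp
  next
    case False
    with bc have "lam = of_real (b / c)" by (simp add: field_simps)
    with False \<open>b \<le> c\<close> \<open>0 \<le> b\<close> show ?thesis by simp
  qed
qed

theorem lemma5:
  fixes p qs :: "'a::finite \<Rightarrow> real"
    and d :: "'a \<Rightarrow> 'a \<Rightarrow> real"
    and f :: "real \<Rightarrow> real"
    and s1 s2 :: real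
    and lam :: complex
  assumes p: "is_pmf p"
    and d: "\<And>x y. 0 \<le> d x y"
    and s1: "0 \<le> s1" and s2: "0 \<le> s2"
    and f_convex: "convex_on {0<..} f"
    and f_diff: "\<And>t. 0 < t \<Longrightarrow> f differentiable (at t)"
    and f_diff2: "\<And>t. 0 < t \<Longrightarrow> (deriv f) differentiable (at t)"
    and f1: "f 1 = 0"
    and qs: "is_pmf qs"
    and fixp: "S_fixed_point s1 s2 d f p qs"
    and ev: "eigenvalue_of (M_mat s1 s2 d f p qs) lam"
  shows "Im lam = 0 \<and> Re lam \<le> 1"
proof -
  define a where "a = A_fac s1 s2 d f p qs"
  define Z where "Z x = (\<Sum>k\<in>UNIV. qs k * a x k)" for x
  have qs_nonneg: "\<And>i. 0 \<le> qs i" and p_nonneg: "\<And>x. 0 \<le> p x"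
    using p qs unfolding is_pmf_def by auto
  have a_pos: "\<And>x i. 0 < a x i" unfolding a_def A_fac_def by simp
  obtain k where "qs k \<noteq> 0"
    using qs unfolding is_pmf_def by (metis sum.neutral zero_neq_one)
  with qs_nonneg[of k] have "0 < qs k" by linarith
  have Z_pos: "0 < Z x" for x
    unfolding Z_def using qs_nonneg a_pos \<open>0 < qs k\<close>
    by (intro sum_pos2[of _ k]) (auto intro!: mult_nonneg_nonneg simp: less_imp_le)
  have "M_mat s1 s2 d f p qs = (\<chi> i j. qs i * (\<Sum>x\<in>UNIV. p x * (a x i / Z x) * (a x j / Z x)))"
    unfolding M_mat_def a_def Z_def by (simp add: power2_eq_square)
  moreover have "(\<Sum>k\<in>UNIV. qs k * (a x k / Z x)) = 1" for x
    using Z_pos[of x] by (simp add: Z_def flip: sum_divide_distrib)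
  moreover have "(\<Sum>x\<in>UNIV. p x * (a x i / Z x)) = 1" if "0 < qs i" for i
  proof -
    have "qs i = qs i * (\<Sum>x\<in>UNIV. p x * a x i / Z x)"
      using fixp unfolding S_fixed_point_def S_image_def a_def Z_def by blast
    with that show ?thesis by simp
  qed
  ultimately show ?thesis
    using ev qs_nonneg p_nonneg a_pos Z_pos
    by (intro eigenvalue_of_kernel_real_le_one[of qs p "\<lambda>x i. a x i / Z x"])
       (auto intro: less_imp_le)
qed

end
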